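(* Let $F_1,F_2:[0,1]\to[0,1]$ be homeomorphisms and let $0<a<1$ be such that $0,a,1$ are fixed points of both $F_1$ and $F_2$, and $F_1(t)>t$ and $F_2(t)>t$ for all $t\in[0,1]\setminus\{0,a,1\}$. Let $f_1,f_2:S^1\to S^1$ be the homeomorphisms of the circle induced by $F_1,F_2$ (via the identification $S^1=[0,1]/(0\sim1)$). Then the iterated function system $\mathcal{F}=\{S^1; f_\lambda\mid \lambda\in\{1,2\}\}$ does not have the average shadowing property.
   Context: The circle $S^1$ is identified with $[0,1)$ via the covering projection $\pi:\mathbb{R}\to S^1$, $\pi(x)=x \bmod 1$, and carries the metric $d$ induced by the usual distance on the real line (arc-length distance). An iterated function system (IFS) $\mathcal{F}=\{X; f_{\lambda}\mid\lambda\in\Lambda\}$ on a metric space $(X,d)$ is a family of continuous maps $f_\lambda:X\to X$ indexed by a finite nonempty set $\Lambda$. For $\sigma=(\lambda_0,\lambda_1,\dots)\in\Lambda^{\mathbb{Z}_+}$ write $\mathcal{F}_{\sigma_n}=f_{\lambda_{n-1}}\circ\cdots\circ f_{\lambda_0}$ for $n\ge1$ and $\mathcal{F}_{\sigma_0}=\mathrm{id}_X$. For $\delta>0$, a sequence $(x_i)_{i\ge0}$ in $X$ is a $\delta$-average pseudo-orbit of $\mathcal{F}$ if there exist a natural number $N$ and $\sigma=(\lambda_0,\lambda_1,\dots)\in\Lambda^{\mathbb{Z}_+}$ such that for all $n\ge N$, $\frac1n\sum_{i=0}^{n-1}d(f_{\lambda_i}(x_i),x_{i+1})<\delta$. A sequence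 $(x_i)_{i\ge0}$ is $\epsilon$-shadowed in average by $z\in X$ if there exists $\sigma\in\Lambda^{\mathbb{Z}_+}$ with $\limsup_{n\to\infty}\frac1n\sum_{i=0}^{n-1}d(\mathcal{F}_{\sigma_i}(z),x_i)<\epsilon$. $\mathcal{F}$ has the average shadowing property if for every $\epsilon>0$ there is $\delta>0$ such that every $\delta$-average pseudo-orbit of $\mathcal{F}$ is $\epsilon$-shadowed in average by some point of $X$. *)

theory Defs
  imports "HOL-Analysis.Analysis" "HOL-Library.Liminf_Limsup"
begin

primrec IFS_iter :: "('l \<Rightarrow> 'a \<Rightarrow> 'a) \<Rightarrow> (nat \<Rightarrow> 'l) \<Rightarrow> nat \<Rightarrow> 'a \<Rightarrow> 'a" where
  "IFS_iter f \<sigma> 0 z = z"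
| "IFS_iter f \<sigma> (Suc n) z = f (\<sigma> n) (IFS_iter f \<sigma> n z)"

definition avg_pseudo_orbit ::
  "'a set \<Rightarrow> ('a \<Rightarrow> 'a \<Rightarrow> real) \<Rightarrow> 'l set \<Rightarrow> ('l \<Rightarrow> 'a \<Rightarrow> 'a) \<Rightarrow> real \<Rightarrow> (nat \<Rightarrow> 'a) \<Rightarrow> bool" where
  "avg_pseudo_orbit X d L f \<delta> xs \<longleftrightarrow>
     (\<forall>i. xs i \<in> X) \<and>
     (\<exists>N::nat. \<exists>\<sigma>::nat \<Rightarrow> 'l. (\<forall>i. \<sigma> i \<in> L) \<and>
        (\<forall>n\<ge>N. (1 / real n) * (\<Sum>i<n. d (f (\<sigma> i) (xs i)) (xs (Suc i))) < \<delta>))"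

definition avg_shadowed ::
  "'a set \<Rightarrow> ('a \<Rightarrow> 'a \<Rightarrow> real) \<Rightarrow> 'l set \<Rightarrow> ('l \<Rightarrow> 'a \<Rightarrow> 'a) \<Rightarrow> real \<Rightarrow> (nat \<Rightarrow> 'a) \<Rightarrow> 'a \<Rightarrow> bool" where
  "avg_shadowed X d L f \<epsilon> xs z \<longleftrightarrow>
     (\<exists>\<sigma>::nat \<Rightarrow> 'l. (\<forall>i. \<sigma> i \<in> L) \<and>
        limsup (\<lambda>n. ereal ((1 / real n) * (\<Sum>i<n. d (IFS_iter f \<sigma> i z) (xs i)))) < ereal \<epsilon>)"

definition has_avg_shadowing ::
  "'a set \<Rightarrow> ('a \<Rightarrow> 'a \<Rightarrow> real) \<Rightarrow> 'l set \<Rightarrow> ('l \<Rightarrow> 'a \<Rightarrow> 'a) \<Rightarrow> bool" where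
  "has_avg_shadowing X d L f \<longleftrightarrow>
     (\<forall>\<epsilon>>0. \<exists>\<delta>>0. \<forall>xs. avg_pseudo_orbit X d L f \<delta> xs \<longrightarrow>
        (\<exists>z\<in>X. avg_shadowed X d L f \<epsilon> xs z))"

text \<open>The circle S^1 is identified with [0,1) with the arc-length metric.\<close>

definition S1 :: "real set" where
  "S1 = {0..<1}"

definition circle_dist :: "real \<Rightarrow> real \<Rightarrow> real" where
  "circle_dist x y = min \<bar>x - y\<bar> (1 - \<bar>x - y\<bar>)"

text \<open>The circle map induced by F : [0,1] -> [0,1] via S^1 = [0,1]/(0~1):
  a point x of [0,1) is sent to F x taken mod 1 (so the value 1 is identified with 0).\<close>

definition circle_map :: "(real \<Rightarrow> real) \<Rightarrow> real \<Rightarrow> real" where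
  "circle_map F x = frac (F x)"

end

theory Submission
  imports Defs
begin

text \<open>Between consecutive fixed points every orbit of the IFS is increasing, so every orbit
  converges to one of the two points 0 = 1 and a of the circle. The pseudo-orbit that rests
  M steps at 0, then M steps at a, and so on, makes only one jump of size
  D = d(0, a) every M steps; hence it is a \<delta>-average pseudo-orbit once D / M < \<delta>. But any
  orbit ends up near a single one of the two points, so its average distance from this
  pseudo-orbit is asymptotically at least D / 2, and no orbit shadows it within D / 4.\<close>

lemma circle_dist_commute: "circle_dist x y = circle_dist y x"
  unfolding circle_dist_def by (simp add: abs_minus_commute)

lemma circle_dist_self [simp]: "circle_dist x x = 0"
  unfolding circle_dist_def by simp

lemma circle_dist_nonneg: "x \<in> S1 \<Longrightarrow> y \<in> S1 \<Longrightarrow> 0 \<le> circle_dist x y"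
  unfolding circle_dist_def S1_def by auto

lemma circle_dist_triangle:
  "x \<in> S1 \<Longrightarrow> y \<in> S1 \<Longrightarrow> w \<in> S1 \<Longrightarrow> circle_dist x w \<le> circle_dist x y + circle_dist y w"
  unfolding circle_dist_def S1_def by (auto simp: min_def abs_if)

lemma abs_circle_dist_le: "x \<in> S1 \<Longrightarrow> y \<in> S1 \<Longrightarrow> \<bar>circle_dist x y\<bar> \<le> \<bar>x - y\<bar>"
  unfolding circle_dist_def S1_def by auto

lemma abs_circle_dist_0_le: "x \<in> S1 \<Longrightarrow> \<bar>circle_dist x 0\<bar> \<le> \<bar>x - 1\<bar>"
  unfolding circle_dist_def S1_def by auto

lemma homeomorphism_below_fixed_point:
  fixes F G :: "real \<Rightarrow> real"
  assumes h: "homeomorphism {0..1} {0..1} F G"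
    and "F 0 = 0" "F q = q" "q \<le> 1" "0 \<le> t" "t < q"
  shows "F t < q"
proof (rule ccontr)
  assume "\<not> F t < q"
  moreover have "continuous_on {0..t} F"
    using h assms by (auto simp: homeomorphism_def intro: continuous_on_subset)
  ultimately obtain s where s: "0 \<le> s" "s \<le> t" "F s = q"
    using IVT'[of F 0 q t] assms by force
  have inv: "G (F x) = x" if "x \<in> {0..1}" for x
    using h that by (simp add: homeomorphism_def)
  have "G (F s) = G (F q)"
    using s(3) assms(3) by simp
  then have "s = q"
    using inv[of s] inv[of q] s assms by simp
  then show False
    using s assms by simp
qed

lemma circle_map_eq_on_S1:
  fixes F G :: "real \<Rightarrow> real"
  assumes h: "homeomorphism {0..1} {0..1} F G" and "F 1 = 1" and x: "x \<in> S1"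
  shows "circle_map F x = F x"
proof -
  have "G (F x) \<noteq> G (F 1)"
    using h x unfolding homeomorphism_def S1_def by auto
  then have "F x \<noteq> 1"
    using \<open>F 1 = 1\<close> by auto
  moreover have "F x \<in> {0..1}"
    using h x unfolding homeomorphism_def S1_def by auto
  ultimately show ?thesis
    unfolding circle_map_def by (simp add: frac_eq)
qed

lemma IFS_iter_circle_map_in_S1:
  "z \<in> S1 \<Longrightarrow> IFS_iter (\<lambda>l. circle_map (F l)) \<sigma> i z \<in> S1"
  by (cases i) (auto simp: S1_def circle_map_def frac_lt_1)

lemma increasing_orbit_tendsto_upper_fixed_point:
  fixes H :: "'l \<Rightarrow> real \<Rightarrow> real" and zs :: "nat \<Rightarrow> real"
  assumes "finite L"
    and cont: "\<And>l. l \<in> L \<Longrightarrow> continuous_on {p..q} (H l)"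
    and up: "\<And>l t. l \<in> L \<Longrightarrow> t \<in> {p<..<q} \<Longrightarrow> H l t \<in> {p<..<q} \<and> t < H l t"
    and start: "zs 0 \<in> {p<..<q}"
    and step: "\<And>i. \<exists>l\<in>L. zs (Suc i) = H l (zs i)"
  shows "zs \<longlonglongrightarrow> q"
proof -
  have inside: "zs i \<in> {p<..<q}" for i
  proof (induction i)
    case (Suc i)
    then show ?case
      using step[of i] up by force
  qed (rule start)
  have "zs i < zs (Suc i)" for i
    using step[of i] up inside by force
  then have "incseq zs"
    by (intro incseq_SucI less_imp_le)
  moreover have "bdd_above (range zs)"
    using inside by (intro bdd_aboveI[of _ q]) (auto intro: less_imp_le)
  ultimately have lim: "zs \<longlonglongrightarrow> (SUP i. zs i)" (is "_ \<longlonglongrightarrow> ?s")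
    by (rule LIMSEQ_incseq_SUP[rotated])
  have below: "zs i \<le> ?s" for i
    using incseq_le[OF \<open>incseq zs\<close> lim] .
  have "?s \<le> q"
    using inside by (intro cSUP_least) (auto intro: less_imp_le)
  moreover have "\<not> ?s < q"
  proof
    assume "?s < q"
    then have s_in: "?s \<in> {p<..<q}"
      using below[of 0] start by auto
    text \<open>Each map moves the limit strictly up, so by continuity it moves all late terms above it.\<close>
    have "\<forall>l\<in>L. \<forall>\<^sub>F i in sequentially. ?s < H l (zs i)"
    proof
      fix l assume "l \<in> L"
      have "(\<lambda>i. H l (zs i)) \<longlonglongrightarrow> H l ?s"
        using s_in inside
        by (intro continuous_on_tendsto_compose[OF cont[OF \<open>l \<in> L\<close>] lim])
          (auto intro!: always_eventually less_imp_le)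
      then show "\<forall>\<^sub>F i in sequentially. ?s < H l (zs i)"
        using up[OF \<open>l \<in> L\<close> s_in] by (intro order_tendstoD(1)) auto
    qed
    then have "\<forall>\<^sub>F i in sequentially. \<forall>l\<in>L. ?s < H l (zs i)"
      by (rule eventually_ball_finite[OF \<open>finite L\<close>])
    then obtain i where "\<forall>l\<in>L. ?s < H l (zs i)"
      using eventually_sequentially by auto
    then show False
      using step[of i] below[of "Suc i"] by force
  qed
  ultimately have "?s = q"
    by simp
  then show ?thesis
    using lim by simp
qed

context
  fixes F :: "'l \<Rightarrow> real \<Rightarrow> real" and L :: "'l set" and a :: real
  assumes finite: "finite L"
    and hom: "\<And>l. l \<in> L \<Longrightarrow> \<exists>G. homeomorphism {0..1} {0..1} (F l) G"
    and a: "0 < a" "a < 1"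
    and fixed: "\<And>l. l \<in> L \<Longrightarrow> F l 0 = 0 \<and> F l a = a \<and> F l 1 = 1"
    and above: "\<And>l t. l \<in> L \<Longrightarrow> t \<in> {0..1} - {0, a, 1} \<Longrightarrow> F l t > t"
begin

lemma IFS_iter_circle_map_Suc:
  assumes "\<sigma> i \<in> L" "z \<in> S1"
  shows "IFS_iter (\<lambda>l. circle_map (F l)) \<sigma> (Suc i) z = F (\<sigma> i) (IFS_iter (\<lambda>l. circle_map (F l)) \<sigma> i z)"
proof -
  obtain G where G: "homeomorphism {0..1} {0..1} (F (\<sigma> i)) G"
    using hom[OF assms(1)] by blast
  show ?thesis
    using circle_map_eq_on_S1[OF G _ IFS_iter_circle_map_in_S1[OF assms(2)]] fixed[OF assms(1)] by simp
qed

lemma IFS_maps_gap_into_itself: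
  assumes "l \<in> L" "0 \<le> p" "q \<in> {a, 1}" "{p<..<q} \<inter> {0, a, 1} = {}" "t \<in> {p<..<q}"
  shows "F l t \<in> {p<..<q} \<and> t < F l t"
proof -
  obtain G where G: "homeomorphism {0..1} {0..1} (F l) G"
    using hom[OF \<open>l \<in> L\<close>] by blast
  have q: "F l q = q" "q \<le> 1"
    using \<open>q \<in> {a, 1}\<close> fixed[OF \<open>l \<in> L\<close>] a by auto
  have t: "0 \<le> t" "t < q" "t \<notin> {0, a, 1}"
    using assms(2,4,5) by auto
  have "F l t < q"
    by (rule homeomorphism_below_fixed_point[OF G]) (use fixed[OF \<open>l \<in> L\<close>] q t in auto)
  moreover have "t < F l t"
    using t q by (intro above[OF \<open>l \<in> L\<close>]) auto
  ultimately show ?thesis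
    using assms(5) by auto
qed

lemma IFS_orbit_tendsto_gap_endpoint:
  assumes \<sigma>: "\<And>i. \<sigma> i \<in> L"
    and "0 \<le> p" "q \<in> {a, 1}" "{p<..<q} \<inter> {0, a, 1} = {}" "z \<in> {p<..<q}"
  shows "(\<lambda>i. IFS_iter (\<lambda>l. circle_map (F l)) \<sigma> i z) \<longlonglongrightarrow> q"
proof (rule increasing_orbit_tendsto_upper_fixed_point[where H = F, OF finite])
  fix l assume "l \<in> L"
  then obtain G where "homeomorphism {0..1} {0..1} (F l) G"
    using hom by blast
  then show "continuous_on {p..q} (F l)"
    using assms a by (auto simp: homeomorphism_def intro: continuous_on_subset)
next
  have "z \<in> S1"
    using assms a by (auto simp: S1_def)
  then show "\<exists>l\<in>L. IFS_iter (\<lambda>l. circle_map (F l)) \<sigma> (Suc i) z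
      = F l (IFS_iter (\<lambda>l. circle_map (F l)) \<sigma> i z)" for i
    using IFS_iter_circle_map_Suc \<sigma> by blast
qed (use assms IFS_maps_gap_into_itself in auto)

lemma IFS_orbit_tendsto_fixed_point:
  assumes \<sigma>: "\<And>i. \<sigma> i \<in> L" and z: "z \<in> S1"
  shows "\<exists>t\<in>{0, a}. (\<lambda>i. circle_dist (IFS_iter (\<lambda>l. circle_map (F l)) \<sigma> i z) t) \<longlonglongrightarrow> 0"
proof -
  define zs where "zs = (\<lambda>i. IFS_iter (\<lambda>l. circle_map (F l)) \<sigma> i z)"
  have zs: "zs i \<in> S1" for i
    using z unfolding zs_def by (rule IFS_iter_circle_map_in_S1)
  have dist_tendsto: "(\<lambda>i. circle_dist (zs i) t) \<longlonglongrightarrow> 0"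
    if "zs \<longlonglongrightarrow> q" and "\<And>i. \<bar>circle_dist (zs i) t\<bar> \<le> \<bar>zs i - q\<bar>" for t q
  proof (rule Lim_null_comparison)
    show "\<forall>\<^sub>F i in sequentially. norm (circle_dist (zs i) t) \<le> \<bar>zs i - q\<bar>"
      using that(2) by simp
    show "(\<lambda>i. \<bar>zs i - q\<bar>) \<longlonglongrightarrow> 0"
      using that(1) by (intro tendsto_rabs_zero LIM_zero)
  qed
  consider "z \<in> {0, a}" | "z \<in> {0<..<a}" | "z \<in> {a<..<1}"
    using z a unfolding S1_def by force
  then show ?thesis
  proof cases
    case 1
    have "zs i = z" for i
    proof (induction i)
      case (Suc i)
      then show ?case
        using IFS_iter_circle_map_Suc[where \<sigma> = \<sigma> and i = i, OF \<sigma> z] fixed[OF \<sigma>] 1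
        by (auto simp: zs_def)
    qed (simp add: zs_def)
    then show ?thesis
      using 1 by (auto simp: zs_def)
  next
    case 2
    have "zs \<longlonglongrightarrow> a"
      unfolding zs_def using 2 a
      by (intro IFS_orbit_tendsto_gap_endpoint[where \<sigma> = \<sigma> and p = 0, OF \<sigma>]) auto
    then have "(\<lambda>i. circle_dist (zs i) a) \<longlonglongrightarrow> 0"
      using abs_circle_dist_le zs a by (intro dist_tendsto) (auto simp: S1_def)
    then show ?thesis
      by (auto simp: zs_def)
  next
    case 3
    have "zs \<longlonglongrightarrow> 1"
      unfolding zs_def using 3 a
      by (intro IFS_orbit_tendsto_gap_endpoint[where \<sigma> = \<sigma> and p = a, OF \<sigma>]) auto
    then have "(\<lambda>i. circle_dist (zs i) 0) \<longlonglongrightarrow> 0"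
      using abs_circle_dist_0_le zs by (intro dist_tendsto) auto
    then show ?thesis
      by (auto simp: zs_def)
  qed
qed

end

definition block_alternating :: "nat \<Rightarrow> 'a \<Rightarrow> 'a \<Rightarrow> nat \<Rightarrow> 'a" where
  "block_alternating M u v i = (if even (i div M) then u else v)"

lemma sum_block_alternating:
  fixes g :: "'a \<Rightarrow> real"
  assumes "M > 0"
  shows "(\<Sum>i<2 * k * M. g (block_alternating M u v i)) = real (k * M) * (g u + g v)"
proof -
  have block: "(\<Sum>i\<in>{m * M..<m * M + M}. g (block_alternating M u v i))
      = real M * g (if even m then u else v)" for m
  proof -
    have "i div M = m" if "i \<in> {m * M..<m * M + M}" for i
      using that by (intro div_nat_eqI) (auto simp: algebra_simps)
    then show ?thesis
      by (simp add: block_alternating_def)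
  qed
  have "(\<Sum>i<2 * k * M. g (block_alternating M u v i))
      = (\<Sum>m<2 * k. real M * g (if even m then u else v))"
    by (simp only: sum.nat_group[symmetric] block)
  also have "\<dots> = real (k * M) * (g u + g v)"
    by (induction k) (simp_all add: algebra_simps)
  finally show ?thesis .
qed

lemma sum_dist_block_alternating_Suc_le:
  fixes d :: "'a \<Rightarrow> 'a \<Rightarrow> real"
  assumes "d u u = 0" "d v v = 0" "d u v \<le> D" "d v u \<le> D" "0 \<le> D"
  shows "(\<Sum>i<n. d (block_alternating M u v i) (block_alternating M u v (Suc i))) \<le> D * real (n div M)"
proof -
  let ?xs = "block_alternating M u v"
  have jump: "d (?xs i) (?xs (Suc i)) \<le> D * (real (Suc i div M) - real (i div M))" for i
  proof (cases "Suc i div M = i div M")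
    case True
    then show ?thesis
      using assms by (simp add: block_alternating_def)
  next
    case False
    then have "1 \<le> real (Suc i div M) - real (i div M)"
      using div_le_mono[of i "Suc i" M] by linarith
    moreover have "d (?xs i) (?xs (Suc i)) \<le> D"
      using assms by (simp add: block_alternating_def)
    ultimately show ?thesis
      using \<open>0 \<le> D\<close> by (metis mult_left_mono mult.right_neutral order_trans)
  qed
  have "(\<Sum>i<n. d (?xs i) (?xs (Suc i))) \<le> (\<Sum>i<n. D * (real (Suc i div M) - real (i div M)))"
    by (intro sum_mono jump)
  also have "\<dots> = D * real (n div M)"
    by (simp add: sum_distrib_left[symmetric] sum_lessThan_telescope[of "\<lambda>i. real (i div M)"])
  finally show ?thesis .
qed

lemma avg_pseudo_orbit_block_alternating:
  fixes d :: "'a \<Rightarrow> 'a \<Rightarrow> real"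
  assumes "l \<in> L" "f l u = u" "f l v = v" "u \<in> X" "v \<in> X" "d u u = 0" "d v v = 0" "\<delta> > 0"
  shows "\<exists>M>0. avg_pseudo_orbit X d L f \<delta> (block_alternating M u v)"
proof -
  define D where "D = max 0 (max (d u v) (d v u))"
  obtain M :: nat where M: "D / \<delta> < real M"
    using reals_Archimedean2 by blast
  have "0 \<le> D"
    by (simp add: D_def)
  then have "M > 0"
    using M \<open>\<delta> > 0\<close> by (metis divide_nonneg_pos gr0I not_less of_nat_0)
  then have "D / real M < \<delta>"
    using M \<open>\<delta> > 0\<close> by (simp add: field_simps)
  let ?xs = "block_alternating M u v"
  have fix_xs: "f l (?xs i) = ?xs i" for i
    using assms by (simp add: block_alternating_def)
  have "1 / real n * (\<Sum>i<n. d (f l (?xs i)) (?xs (Suc i))) < \<delta>" for n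
  proof -
    have "(\<Sum>i<n. d (f l (?xs i)) (?xs (Suc i))) \<le> D * real (n div M)"
      unfolding fix_xs by (rule sum_dist_block_alternating_Suc_le) (use assms in \<open>auto simp: D_def\<close>)
    also have "\<dots> \<le> D * (real n / real M)"
      using \<open>0 \<le> D\<close> by (intro mult_left_mono of_nat_div_le_of_nat)
    finally have "1 / real n * (\<Sum>i<n. d (f l (?xs i)) (?xs (Suc i))) \<le> D / real M"
      using \<open>0 \<le> D\<close> by (cases "n = 0") (simp_all add: field_simps)
    then show ?thesis
      using \<open>D / real M < \<delta>\<close> by simp
  qed
  moreover have "\<forall>i. ?xs i \<in> X"
    using assms by (simp add: block_alternating_def)
  ultimately show ?thesis
    unfolding avg_pseudo_orbit_def using \<open>l \<in> L\<close> \<open>M > 0\<close>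
    by (intro exI[of _ M] conjI exI[of _ 0] exI[of _ "\<lambda>_. l"]) auto
qed

lemma sum_circle_dist_block_alternating_ge:
  assumes uv: "u \<in> S1" "v \<in> S1" and t: "t \<in> {u, v}" and "M > 0"
    and zs: "\<And>i. zs i \<in> S1" and K: "\<And>i. i \<ge> K \<Longrightarrow> circle_dist (zs i) t \<le> \<eta>" and "0 \<le> \<eta>"
  shows "real (2 * k * M) * (circle_dist u v / 2 - \<eta>) - real K * circle_dist u v
    \<le> (\<Sum>i<2 * k * M. circle_dist (zs i) (block_alternating M u v i))"
proof -
  define D where "D = circle_dist u v"
  define n where "n = 2 * k * M"
  let ?xs = "block_alternating M u v"
  have xs: "?xs i \<in> {u, v}" for i
    by (simp add: block_alternating_def)
  have "0 \<le> D"
    using uv by (simp add: D_def circle_dist_nonneg)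
  have t_xs: "circle_dist t (?xs i) \<le> D" for i
    using xs[of i] t \<open>0 \<le> D\<close> by (auto simp: D_def circle_dist_commute)
  have pointwise: "circle_dist t (?xs i) - \<eta> - (if i < K then D else 0) \<le> circle_dist (zs i) (?xs i)" for i
  proof (cases "i < K")
    case True
    then show ?thesis
      using t_xs[of i] circle_dist_nonneg[OF zs[of i], of "?xs i"] xs[of i] uv \<open>0 \<le> \<eta>\<close> by auto
  next
    case False
    have "circle_dist t (?xs i) \<le> circle_dist t (zs i) + circle_dist (zs i) (?xs i)"
      using t xs[of i] uv zs by (intro circle_dist_triangle) auto
    then show ?thesis
      using K[of i] False by (simp add: circle_dist_commute)
  qed
  have "(\<Sum>i<n. if i < K then D else 0) = (\<Sum>i\<in>{..<n} \<inter> {..<K}. D)"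
    by (simp only: sum.inter_restrict[OF finite_lessThan] lessThan_iff)
  also have "\<dots> \<le> (\<Sum>i<K. D)"
    using \<open>0 \<le> D\<close> by (intro sum_mono2) auto
  finally have "(\<Sum>i<n. if i < K then D else 0) \<le> real K * D"
    by simp
  moreover have "(\<Sum>i<n. circle_dist t (?xs i)) = real n * (D / 2)"
    using sum_block_alternating[OF \<open>M > 0\<close>, where g = "circle_dist t" and k = k] t
    by (auto simp: n_def D_def circle_dist_commute)
  moreover have "(\<Sum>i<n. circle_dist t (?xs i) - \<eta> - (if i < K then D else 0))
      = (\<Sum>i<n. circle_dist t (?xs i)) - real n * \<eta> - (\<Sum>i<n. if i < K then D else 0)"
    by (simp add: sum_subtractf)
  ultimately have "real n * (D / 2 - \<eta>) - real K * D
      \<le> (\<Sum>i<n. circle_dist t (?xs i) - \<eta> - (if i < K then D else 0))"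
    by (simp add: algebra_simps)
  also have "\<dots> \<le> (\<Sum>i<n. circle_dist (zs i) (?xs i))"
    by (intro sum_mono pointwise)
  finally show ?thesis
    by (simp add: n_def D_def)
qed

lemma limsup_avg_circle_dist_block_alternating_ge:
  assumes uv: "u \<in> S1" "v \<in> S1" and t: "t \<in> {u, v}" and "M > 0"
    and zs: "\<And>i. zs i \<in> S1" and lim: "(\<lambda>i. circle_dist (zs i) t) \<longlonglongrightarrow> 0"
    and \<epsilon>: "\<epsilon> < circle_dist u v / 2"
  shows "ereal \<epsilon> \<le> limsup (\<lambda>n. ereal (1 / real n * (\<Sum>i<n. circle_dist (zs i) (block_alternating M u v i))))"
proof (rule ccontr)
  define D where "D = circle_dist u v"
  define c where "c = D / 2 - \<epsilon>"
  let ?S = "\<lambda>n. \<Sum>i<n. circle_dist (zs i) (block_alternating M u v i)"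
  assume "\<not> ?thesis"
  then have "\<forall>\<^sub>F n in sequentially. ereal (1 / real n * ?S n) < ereal \<epsilon>"
    by (intro Limsup_lessD) (simp add: not_le)
  then obtain N where N: "\<And>n. n \<ge> N \<Longrightarrow> 1 / real n * ?S n < \<epsilon>"
    by (auto simp: eventually_sequentially)
  have "c > 0"
    using \<epsilon> by (simp add: c_def D_def)
  then have "\<forall>\<^sub>F i in sequentially. circle_dist (zs i) t \<le> c / 2"
    using order_tendstoD(2)[OF lim, of "c / 2"] by (auto elim: eventually_mono)
  then obtain K where K: "\<And>i. i \<ge> K \<Longrightarrow> circle_dist (zs i) t \<le> c / 2"
    by (auto simp: eventually_sequentially)
  text \<open>Take n = 2 k M so large that the first K terms cost at most n c / 2.\<close>
  obtain k0 :: nat where k0: "real K * D / (c * real M) \<le> real k0"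
    using real_arch_simple by blast
  define k where "k = max k0 (Suc N)"
  define n where "n = 2 * k * M"
  have "k * 1 \<le> 2 * k * M"
    using \<open>M > 0\<close> by (intro mult_le_mono) auto
  then have "k \<le> n"
    unfolding n_def by linarith
  then have "n \<ge> N" "real n > 0"
    by (simp_all add: k_def)
  have "real K * D \<le> real k0 * (c * real M)"
    using k0 \<open>c > 0\<close> \<open>M > 0\<close> by (simp add: divide_le_eq)
  also have "\<dots> \<le> real k * (c * real M)"
    using \<open>c > 0\<close> by (intro mult_right_mono) (auto simp: k_def)
  also have "\<dots> = real n * (c / 2)"
    by (simp add: n_def)
  finally have "real K * D \<le> real n * (c / 2)" .
  moreover have "real n * (D / 2 - c / 2) - real K * D \<le> ?S n"
    using sum_circle_dist_block_alternating_ge[where zs = zs and K = K and k = k, OF uv t \<open>M > 0\<close> zs K] \<open>c > 0\<close>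
    by (simp add: n_def D_def)
  moreover have "real n * \<epsilon> = real n * (D / 2 - c / 2) - real n * (c / 2)"
    by (simp add: c_def algebra_simps)
  ultimately have "real n * \<epsilon> \<le> ?S n"
    by linarith
  then show False
    using N[OF \<open>n \<ge> N\<close>] \<open>real n > 0\<close> by (simp add: field_simps)
qed

theorem mainTheorem5:
  fixes F1 F2 :: "real \<Rightarrow> real" and a :: real
  assumes hom1: "\<exists>G. homeomorphism {0..1} {0..1} F1 G"
    and hom2: "\<exists>G. homeomorphism {0..1} {0..1} F2 G"
    and a: "0 < a" "a < 1"
    and fix1: "F1 0 = 0" "F1 a = a" "F1 1 = 1"
    and fix2: "F2 0 = 0" "F2 a = a" "F2 1 = 1"
    and above1: "\<And>t. t \<in> {0..1} - {0, a, 1} \<Longrightarrow> F1 t > t"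
    and above2: "\<And>t. t \<in> {0..1} - {0, a, 1} \<Longrightarrow> F2 t > t"
  shows "\<not> has_avg_shadowing S1 circle_dist {1::nat, 2}
           (\<lambda>l. if l = 1 then circle_map F1 else circle_map F2)"
proof
  define F where "F = (\<lambda>l::nat. if l = 1 then F1 else F2)"
  define D where "D = circle_dist 0 a"
  have f_eq: "(\<lambda>l. if l = 1 then circle_map F1 else circle_map F2) = (\<lambda>l. circle_map (F l))"
    by (auto simp: F_def)
  have "0 \<in> S1" "a \<in> S1" "D > 0" "circle_map (F 1) 0 = 0" "circle_map (F 1) a = a"
    using a fix1 by (auto simp: S1_def D_def circle_dist_def F_def circle_map_def frac_eq)
  assume "has_avg_shadowing S1 circle_dist {1::nat, 2} (\<lambda>l. if l = 1 then circle_map F1 else circle_map F2)"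
  moreover have "D / 4 > 0"
    using \<open>D > 0\<close> by simp
  ultimately obtain \<delta> where "\<delta> > 0" and shadow: "\<And>xs. avg_pseudo_orbit S1 circle_dist {1, 2} (\<lambda>l. circle_map (F l)) \<delta> xs
      \<Longrightarrow> \<exists>z\<in>S1. avg_shadowed S1 circle_dist {1, 2} (\<lambda>l. circle_map (F l)) (D / 4) xs z"
    unfolding has_avg_shadowing_def f_eq by blast
  obtain M where "M > 0"
    and "avg_pseudo_orbit S1 circle_dist {1, 2} (\<lambda>l. circle_map (F l)) \<delta> (block_alternating M 0 a)"
    using avg_pseudo_orbit_block_alternating[where d = circle_dist and l = "1::nat" and L = "{1, 2}"
        and f = "\<lambda>l. circle_map (F l)" and u = 0 and v = a and X = S1]
      \<open>circle_map (F 1) 0 = 0\<close> \<open>circle_map (F 1) a = a\<close> \<open>0 \<in> S1\<close> \<open>a \<in> S1\<close> \<open>\<delta> > 0\<close>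
    by auto
  then obtain z \<sigma> where z: "z \<in> S1" and \<sigma>: "\<And>i. \<sigma> i \<in> {1, 2}"
    and close: "limsup (\<lambda>n. ereal (1 / real n * (\<Sum>i<n. circle_dist
      (IFS_iter (\<lambda>l. circle_map (F l)) \<sigma> i z) (block_alternating M 0 a i)))) < ereal (D / 4)"
    using shadow unfolding avg_shadowed_def by blast
  have family: "\<exists>G. homeomorphism {0..1} {0..1} (F l) G" "F l 0 = 0 \<and> F l a = a \<and> F l 1 = 1"
    "\<And>t. t \<in> {0..1} - {0, a, 1} \<Longrightarrow> t < F l t" if "l \<in> {1, 2}" for l
    using that hom1 hom2 fix1 fix2 above1 above2 by (auto simp: F_def)
  obtain t where "t \<in> {0, a}" "(\<lambda>i. circle_dist (IFS_iter (\<lambda>l. circle_map (F l)) \<sigma> i z) t) \<longlonglongrightarrow> 0"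
    using IFS_orbit_tendsto_fixed_point[where F = F and L = "{1, 2}" and \<sigma> = \<sigma> and z = z,
        OF _ family(1) a family(2,3) \<sigma> z]
    by blast
  then have "ereal (D / 4) \<le> limsup (\<lambda>n. ereal (1 / real n * (\<Sum>i<n. circle_dist
      (IFS_iter (\<lambda>l. circle_map (F l)) \<sigma> i z) (block_alternating M 0 a i))))"
    using \<open>0 \<in> S1\<close> \<open>a \<in> S1\<close> \<open>M > 0\<close> \<open>D > 0\<close> IFS_iter_circle_map_in_S1[OF z]
    by (intro limsup_avg_circle_dist_block_alternating_ge) (auto simp: D_def)
  then show False
    using close by simp
qed

end
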